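(* Let $X$ be a separable metric space endowed with the universal $\sigma$-algebra $\mathscr U(X)$, and let $\mathbb P$ be the completion of a Borel probability measure on $X$ restricted to $\mathscr U(X)$. Assume that $\mathbb P_n$ converges weakly to $\mathbb Q$ (the completion of a Borel measure restricted to $\mathscr U(X)$), where $\mathbb P_n(E)=\mathbb P(E\cap A_n)$ for a sequence of sets $A_n\in\mathscr U(X)$. Then for every measurable set $E\in\mathscr U(X)$, $\lim_{n\to\infty}\mathbb P_n(E)=\mathbb Q(E)$.
   Context: $\mathscr U(X)$ is the intersection over all $\sigma$-finite Borel measures $\nu$ on $X$ of the $\nu$-completion $\sigma$-algebras. Weak convergence means $\int f\,d\mathbb P_n\to\int f\,d\mathbb Q$ for all bounded continuous $f$. *)

theory Defs
  imports "HOL-Probability.Probability"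
begin

definition universal_sets :: "'a::topological_space set set" where
  "universal_sets = \<Inter> {sets (completion \<nu>) | \<nu>. sets \<nu> = sets (borel :: 'a measure) \<and> sigma_finite_measure \<nu>}"

definition univ_restrict :: "'a::topological_space measure \<Rightarrow> 'a measure" where
  "univ_restrict \<mu> = measure_of UNIV universal_sets (emeasure (completion \<mu>))"

definition trace_meas :: "'a::topological_space measure \<Rightarrow> 'a set \<Rightarrow> 'a measure" where
  "trace_meas P A = measure_of UNIV universal_sets (\<lambda>E. emeasure P (E \<inter> A))"

definition weak_conv_bc :: "(nat \<Rightarrow> 'a::topological_space measure) \<Rightarrow> 'a measure \<Rightarrow> bool" where
  "weak_conv_bc Ps Q \<longleftrightarrow> (\<forall>f :: 'a \<Rightarrow> real. continuous_on UNIV f \<and> bounded (range f) \<longrightarrow>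
      (\<lambda>n. integral\<^sup>L (Ps n) f) \<longlonglongrightarrow> integral\<^sup>L Q f)"

end

(*
  Write P_n(B) = P(B \<inter> A_n). For closed F the continuous functions
  f_k = max 0 (1 - k d(x, F)) decrease to the indicator of F, and because P_n \<le> P the error
  P_n(f_k) - P_n(F) \<le> P(f_k - 1_F) is small uniformly in n; hence P_n(F) \<longrightarrow> Q(F).
  The same domination lets Tannery's theorem pass the limit through countable disjoint unions,
  so the sets B with P_n(B) \<longrightarrow> Q(B) form a Dynkin system and contain all Borel sets.
  A universally measurable E differs from a Borel set only inside a P-null Borel set N,
  and Q(N) = lim P_n(N) = 0, so the convergence extends to E.
*)
theory Submission
  imports Defs
begin

lemma mem_universal_sets:
  "E \<in> universal_sets \<longleftrightarrow>
    (\<forall>\<nu> :: 'a::topological_space measure. sets \<nu> = sets borel \<longrightarrow> sigma_finite_measure \<nu> \<longrightarrow>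
      E \<in> sets (completion \<nu>))"
  unfolding universal_sets_def by blast

lemma sigma_algebra_universal_sets: "sigma_algebra UNIV universal_sets"
  unfolding sigma_algebra_iff2
proof (intro conjI ballI allI impI)
  have space: "space (completion \<nu>) = UNIV" if "sets \<nu> = sets borel" for \<nu> :: "'a measure"
    using sets_eq_imp_space_eq[OF that] by simp
  show "UNIV - E \<in> universal_sets" if "E \<in> universal_sets" for E :: "'a set"
    unfolding mem_universal_sets
  proof (intro allI impI)
    fix \<nu> :: "'a measure" assume \<nu>: "sets \<nu> = sets borel" "sigma_finite_measure \<nu>"
    then have "E \<in> sets (completion \<nu>)"
      using that by (simp add: mem_universal_sets)
    then have "space (completion \<nu>) - E \<in> sets (completion \<nu>)"
      by (rule sets.compl_sets)
    then show "UNIV - E \<in> sets (completion \<nu>)"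
      using space[OF \<nu>(1)] by simp
  qed
  show "(\<Union>i. E i) \<in> universal_sets" if "range E \<subseteq> universal_sets" for E :: "nat \<Rightarrow> 'a set"
    unfolding mem_universal_sets
  proof (intro allI impI)
    fix \<nu> :: "'a measure" assume "sets \<nu> = sets borel" "sigma_finite_measure \<nu>"
    then have "range E \<subseteq> sets (completion \<nu>)"
      using that by (auto simp: mem_universal_sets)
    then show "(\<Union>i. E i) \<in> sets (completion \<nu>)"
      by auto
  qed
qed (simp_all add: mem_universal_sets)

lemma sets_univ_restrict [simp]: "sets (univ_restrict M) = universal_sets"
  unfolding univ_restrict_def by (rule sigma_algebra.sets_measure_of_eq[OF sigma_algebra_universal_sets])

lemma space_univ_restrict [simp]: "space (univ_restrict M) = UNIV"
  unfolding univ_restrict_def by (rule sigma_algebra.space_measure_of_eq[OF sigma_algebra_universal_sets])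

lemma sets_borel_subset_universal_sets: "sets borel \<subseteq> universal_sets"
  unfolding universal_sets_def by auto

lemma space_eq_UNIV_if_sets_borel_subset:
  assumes "sets (borel :: 'a::topological_space measure) \<subseteq> sets M"
  shows "space M = UNIV"
proof -
  have "UNIV \<in> sets M"
    using assms by auto
  then show ?thesis
    using sets.sets_into_space by blast
qed

lemma universal_sets_subset_completion:
  "sets M = sets borel \<Longrightarrow> sigma_finite_measure M \<Longrightarrow> universal_sets \<subseteq> sets (completion M)"
  unfolding universal_sets_def by blast

lemma emeasure_univ_restrict:
  assumes "sets M = sets borel" "sigma_finite_measure M" "E \<in> universal_sets"
  shows "emeasure (univ_restrict M) E = emeasure (completion M) E"
proof -
  have space: "space (completion M) = UNIV"
    using sets_eq_imp_space_eq[OF assms(1)] by simp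
  have "subalgebra (completion M) (univ_restrict M)"
    using universal_sets_subset_completion[OF assms(1,2)] space by (simp add: subalgebra_def)
  moreover have "restr_to_subalg (completion M) (univ_restrict M) = univ_restrict M"
    unfolding restr_to_subalg_def sets_univ_restrict space by (simp add: univ_restrict_def)
  ultimately show ?thesis
    using emeasure_restr_to_subalg assms(3) by (metis sets_univ_restrict)
qed

lemma finite_measure_univ_restrict:
  assumes "sets M = sets borel" "finite_measure M"
  shows "finite_measure (univ_restrict M)"
proof (rule finite_measureI)
  have "UNIV \<in> sets M"
    using assms(1) by simp
  then have "emeasure (univ_restrict M) UNIV = emeasure M UNIV"
    using emeasure_univ_restrict[OF assms(1) finite_measure.sigma_finite_measure[OF assms(2)], of UNIV]
      sets_borel_subset_universal_sets assms(1) by auto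
  also have "\<dots> \<noteq> \<infinity>"
    using finite_measure.emeasure_finite[OF assms(2)] by simp
  finally show "emeasure (univ_restrict M) (space (univ_restrict M)) \<noteq> \<infinity>"
    by simp
qed

lemma trace_meas_eq_density:
  assumes "sets P = universal_sets" "A \<in> universal_sets"
  shows "trace_meas P A = density P (indicator A)"
proof -
  have space: "space P = UNIV"
    using space_eq_UNIV_if_sets_borel_subset sets_borel_subset_universal_sets assms(1) by auto
  have "trace_meas P A = measure_of UNIV universal_sets (emeasure (density P (indicator A)))"
    unfolding trace_meas_def
  proof (rule measure_of_eq)
    fix E :: "'a set" assume "E \<in> sigma_sets UNIV universal_sets"
    then have "E \<in> universal_sets"
      by (simp add: sigma_algebra.sigma_sets_eq[OF sigma_algebra_universal_sets])
    then show "emeasure P (E \<inter> A) = emeasure (density P (indicator A)) E"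
      using assms by (simp add: emeasure_restricted Int_commute)
  qed simp
  also have "\<dots> = density P (indicator A)"
    using measure_of_of_measure[of "density P (indicator A)"] space assms(1) by simp
  finally show ?thesis .
qed

lemma emeasure_trace_meas:
  assumes "sets P = universal_sets" "A \<in> universal_sets" "E \<in> universal_sets"
  shows "emeasure (trace_meas P A) E = emeasure P (E \<inter> A)"
  using assms by (simp add: trace_meas_eq_density emeasure_restricted Int_commute)

lemma integral_trace_meas:
  fixes f :: "'a::topological_space \<Rightarrow> real"
  assumes "sets P = universal_sets" "A \<in> universal_sets" "f \<in> borel_measurable P"
  shows "integral\<^sup>L (trace_meas P A) f = (\<integral>x. indicator A x * f x \<partial>P)"
  using integral_density[of f P "indicator A"] borel_measurable_indicator[of A P] assms
  by (simp add: trace_meas_eq_density ennreal_indicator)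

lemma weak_conv_bc_trace_measD:
  fixes f :: "'a::topological_space \<Rightarrow> real"
  assumes "sets P = universal_sets" "\<And>n. A n \<in> universal_sets"
    and "weak_conv_bc (\<lambda>n. trace_meas P (A n)) Q"
    and "continuous_on UNIV f" "bounded (range f)"
  shows "(\<lambda>n. \<integral>x. indicator (A n) x * f x \<partial>P) \<longlonglongrightarrow> (\<integral>x. f x \<partial>Q)"
proof -
  have "space P = UNIV"
    using space_eq_UNIV_if_sets_borel_subset sets_borel_subset_universal_sets assms(1) by auto
  then have "f \<in> borel_measurable P"
    by (intro borel_measurable_subalgebra[OF _ _ borel_measurable_continuous_onI[OF assms(4)]])
       (simp_all add: assms(1) sets_borel_subset_universal_sets)
  then have "integral\<^sup>L (trace_meas P (A n)) f = (\<integral>x. indicator (A n) x * f x \<partial>P)" for n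
    by (rule integral_trace_meas[OF assms(1,2)])
  moreover have "(\<lambda>n. integral\<^sup>L (trace_meas P (A n)) f) \<longlonglongrightarrow> integral\<^sup>L Q f"
    using assms(3-5) unfolding weak_conv_bc_def by (auto dest: spec[of _ f])
  ultimately show ?thesis
    by simp
qed

lemma LIMSEQ_approximation:
  fixes x :: "nat \<Rightarrow> 'a::metric_space"
  assumes close: "\<And>k n. dist (x n) (y k n) \<le> e k"
    and y: "\<And>k. y k \<longlonglongrightarrow> z k" and z: "z \<longlonglongrightarrow> L" and e: "e \<longlonglongrightarrow> 0"
  shows "x \<longlonglongrightarrow> L"
proof (rule metric_LIMSEQ_I)
  fix r :: real assume "0 < r"
  then have "\<forall>\<^sub>F k in sequentially. e k < r / 3 \<and> dist (z k) L < r / 3"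
    using order_tendstoD(2)[OF e, of "r / 3"] tendstoD[OF z, of "r / 3"] by (simp add: eventually_conj)
  then obtain k where k: "e k < r / 3" "dist (z k) L < r / 3"
    by (auto simp: eventually_sequentially)
  have "\<forall>\<^sub>F n in sequentially. dist (y k n) (z k) < r / 3"
    using tendstoD[OF y[of k], of "r / 3"] \<open>0 < r\<close> by simp
  then obtain N where N: "\<And>n. n \<ge> N \<Longrightarrow> dist (y k n) (z k) < r / 3"
    by (auto simp: eventually_sequentially)
  have "dist (x n) L < r" if "n \<ge> N" for n
    using dist_triangle[of "x n" L "y k n"] dist_triangle[of "y k n" L "z k"] close[of n k] N[OF that] k
    by linarith
  then show "\<exists>N. \<forall>n\<ge>N. dist (x n) L < r"
    by blast
qed

lemma tendsto_cutoff_infdist_indicator: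
  fixes F :: "'a::metric_space set"
  assumes "closed F" "F \<noteq> {}"
  shows "(\<lambda>k. max 0 (1 - real k * infdist x F)) \<longlonglongrightarrow> indicator F x"
proof (cases "x \<in> F")
  case False
  then have "infdist x F > 0"
    using assms in_closed_iff_infdist_zero infdist_nonneg[of x F] by fastforce
  then have "filterlim (\<lambda>k. real k * infdist x F) at_top sequentially"
    by (intro filterlim_at_top_mult_tendsto_pos[OF tendsto_const] filterlim_real_sequentially)
  then have "\<forall>\<^sub>F k in sequentially. 1 \<le> real k * infdist x F"
    by (simp add: filterlim_at_top)
  then have "\<forall>\<^sub>F k in sequentially. max 0 (1 - real k * infdist x F) = 0"
    by (rule eventually_mono) simp
  then show ?thesis
    using False by (simp add: tendsto_eventually)
qed simp

lemma (in finite_measure) dist_measure_Int_integral_le: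
  fixes g :: "'a \<Rightarrow> real"
  assumes [measurable]: "F \<in> sets M" "A \<in> sets M" "g \<in> borel_measurable M"
    and g: "\<And>x. indicator F x \<le> g x" "\<And>x. g x \<le> 1"
  shows "dist (measure M (F \<inter> A)) (\<integral>x. indicator A x * g x \<partial>M) \<le> (\<integral>x. g x - indicator F x \<partial>M)"
proof -
  have int: "integrable M h" if "h \<in> borel_measurable M" "\<And>x. \<bar>h x\<bar> \<le> 1" for h :: "'a \<Rightarrow> real"
    using integrable_const_bound[of h 1] that by auto
  have g_bounds: "0 \<le> g x" "g x \<le> 1" "x \<in> F \<Longrightarrow> g x = 1" for x
    using g(1)[of x] g(2)[of x] by (cases "x \<in> F"; simp)+
  have "measure M (F \<inter> A) = (\<integral>x. indicator A x * indicator F x \<partial>M)"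
    by (simp add: indicator_inter_arith[symmetric] Int_commute sets.Int_space_eq2)
  also have "\<dots> = (\<integral>x. indicator A x * g x \<partial>M) - (\<integral>x. indicator A x * (g x - indicator F x) \<partial>M)"
    by (subst Bochner_Integration.integral_diff[symmetric])
       (auto intro!: int simp: right_diff_distrib indicator_def g_bounds)
  finally have "dist (measure M (F \<inter> A)) (\<integral>x. indicator A x * g x \<partial>M)
      = (\<integral>x. indicator A x * (g x - indicator F x) \<partial>M)"
    using g by (simp add: dist_real_def integral_nonneg indicator_def)
  also have "\<dots> \<le> (\<integral>x. g x - indicator F x \<partial>M)"
    using g by (intro integral_mono int) (auto simp: indicator_def g_bounds)
  finally show ?thesis .
qed

lemma tendsto_measure_Int_closed:
  fixes P Q :: "'a::metric_space measure"
  assumes P: "finite_measure P" "sets borel \<subseteq> sets P"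
    and Q: "finite_measure Q" "sets borel \<subseteq> sets Q"
    and A: "\<And>n. A n \<in> sets P"
    and weak: "\<And>f :: 'a \<Rightarrow> real. continuous_on UNIV f \<Longrightarrow> bounded (range f) \<Longrightarrow>
       (\<lambda>n. \<integral>x. indicator (A n) x * f x \<partial>P) \<longlonglongrightarrow> (\<integral>x. f x \<partial>Q)"
    and F: "closed F"
  shows "(\<lambda>n. measure P (F \<inter> A n)) \<longlonglongrightarrow> measure Q F"
proof (cases "F = {}")
  case False
  define f where "f k = (\<lambda>x. max 0 (1 - real k * infdist x F))" for k
  have f_cont: "continuous_on UNIV (f k)" for k
    unfolding f_def by (intro continuous_intros)
  have f_bounds: "0 \<le> f k x" "f k x \<le> 1" "indicator F x \<le> f k x" "\<bar>f k x - indicator F x\<bar> \<le> 1"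
    for k x
    unfolding f_def using infdist_nonneg[of x F] by (auto simp: indicator_def)
  have f_lim: "(\<lambda>k. f k x) \<longlonglongrightarrow> indicator F x" for x
    unfolding f_def by (rule tendsto_cutoff_infdist_indicator[OF F False])
  have space: "space P = UNIV" "space Q = UNIV"
    using space_eq_UNIV_if_sets_borel_subset P(2) Q(2) by auto
  have [measurable]: "F \<in> sets P" "F \<in> sets Q"
    using F P(2) Q(2) by auto
  have [measurable]: "f k \<in> borel_measurable P" "f k \<in> borel_measurable Q" for k
    using borel_measurable_subalgebra[OF _ _ borel_measurable_continuous_onI[OF f_cont]] space P(2) Q(2)
    by auto
  have "(\<lambda>k. \<integral>x. f k x - indicator F x \<partial>P) \<longlonglongrightarrow> (\<integral>x. 0 \<partial>P)"
  proof (rule integral_dominated_convergence[where w="\<lambda>_. 1"])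
    show "AE x in P. (\<lambda>k. f k x - indicator F x) \<longlonglongrightarrow> 0"
      using f_lim by (intro AE_I2 LIM_zero)
    show "\<And>k. AE x in P. norm (f k x - indicator F x) \<le> 1"
      using f_bounds by simp
  qed (use P(1) in \<open>auto intro: finite_measure.integrable_const\<close>)
  moreover have "(\<lambda>k. \<integral>x. f k x \<partial>Q) \<longlonglongrightarrow> (\<integral>x. indicator F x \<partial>Q)"
  proof (rule integral_dominated_convergence[where w="\<lambda>_. 1"])
    show "\<And>k. AE x in Q. norm (f k x) \<le> 1"
      using f_bounds by auto
  qed (use Q(1) f_lim in \<open>auto intro: finite_measure.integrable_const\<close>)
  moreover have "bounded (range (f k))" for k
    using f_bounds by (auto simp: bounded_iff intro!: exI[of _ 1])
  ultimately show ?thesis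
    using LIMSEQ_approximation[OF finite_measure.dist_measure_Int_integral_le[OF P(1)] weak[OF f_cont]]
      f_bounds A space by simp
qed simp

lemma tendsto_measure_Int_sigma_sets:
  assumes P: "finite_measure P" and Q: "finite_measure Q"
    and G: "Int_stable G" "G \<subseteq> Pow \<Omega>" "\<Omega> \<in> G"
    and sets: "sigma_sets \<Omega> G \<subseteq> sets P" "sigma_sets \<Omega> G \<subseteq> sets Q"
    and A: "\<And>n. A n \<in> sets P"
    and lim: "\<And>B. B \<in> G \<Longrightarrow> (\<lambda>n. measure P (B \<inter> A n)) \<longlonglongrightarrow> measure Q B"
    and B: "B \<in> sigma_sets \<Omega> G"
  shows "(\<lambda>n. measure P (B \<inter> A n)) \<longlonglongrightarrow> measure Q B"
  using G(1,2) B
proof (induction rule: sigma_sets_induct_disjoint)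
  case (basic B)
  then show ?case by (rule lim)
next
  case empty
  then show ?case by simp
next
  case (compl X)
  have \<Omega>: "\<Omega> \<in> sets P" "\<Omega> \<in> sets Q" and X: "X \<in> sets P" "X \<in> sets Q" "X \<subseteq> \<Omega>"
    using G(3) compl(1) sets sigma_sets_into_sp[OF G(2)] by auto
  have "measure P ((\<Omega> - X) \<inter> A n) = measure P (\<Omega> \<inter> A n) - measure P (X \<inter> A n)" for n
  proof -
    have "(\<Omega> - X) \<inter> A n = (\<Omega> \<inter> A n) - (X \<inter> A n)"
      by blast
    then show ?thesis
      using finite_measure.finite_measure_Diff[OF P, of "\<Omega> \<inter> A n" "X \<inter> A n"] \<Omega> X A by auto
  qed
  moreover have "measure Q (\<Omega> - X) = measure Q \<Omega> - measure Q X"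
    using finite_measure.finite_measure_Diff[OF Q \<Omega>(2) X(2,3)] .
  ultimately show ?case
    using tendsto_diff[OF lim[OF G(3)] compl(2)] by simp
next
  case (union X)
  have X: "range X \<subseteq> sets P" "range X \<subseteq> sets Q"
    using union(2) sets by auto
  have "(\<lambda>n. \<Sum>i. measure P (X i \<inter> A n)) \<longlonglongrightarrow> (\<Sum>i. measure Q (X i))"
  proof (rule tannerys_theorem[THEN conjunct2, THEN conjunct2])
    show "summable (\<lambda>i. measure P (X i))"
      using finite_measure.finite_measure_UNION[OF P X(1) union(1)] by (rule sums_summable)
    show "\<forall>\<^sub>F (i, n) in at_top \<times>\<^sub>F sequentially. norm (measure P (X i \<inter> A n)) \<le> measure P (X i)"
      using X(1) A by (intro always_eventually) (auto intro!: finite_measure.finite_measure_mono[OF P])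
  qed (use union(3) in auto)
  moreover have "(\<lambda>i. measure P (X i \<inter> A n)) sums measure P ((\<Union>i. X i) \<inter> A n)" for n
  proof -
    have "range (\<lambda>i. X i \<inter> A n) \<subseteq> sets P"
      using X(1) A by auto
    moreover have "disjoint_family (\<lambda>i. X i \<inter> A n)"
      using union(1) by (rule disjoint_family_on_bisimulation) auto
    moreover have "(\<Union>i. X i \<inter> A n) = (\<Union>i. X i) \<inter> A n"
      by blast
    ultimately show ?thesis
      using finite_measure.finite_measure_UNION[OF P] by metis
  qed
  moreover have "(\<lambda>i. measure Q (X i)) sums measure Q (\<Union>i. X i)"
    by (rule finite_measure.finite_measure_UNION[OF Q X(2) union(1)])
  ultimately show ?case
    by (simp add: sums_iff)
qed

lemma tendsto_measure_Int_borel: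
  fixes P Q :: "'a::metric_space measure"
  assumes P: "finite_measure P" "sets borel \<subseteq> sets P"
    and Q: "finite_measure Q" "sets borel \<subseteq> sets Q"
    and A: "\<And>n. A n \<in> sets P"
    and weak: "\<And>f :: 'a \<Rightarrow> real. continuous_on UNIV f \<Longrightarrow> bounded (range f) \<Longrightarrow>
       (\<lambda>n. \<integral>x. indicator (A n) x * f x \<partial>P) \<longlonglongrightarrow> (\<integral>x. f x \<partial>Q)"
    and B: "B \<in> sets borel"
  shows "(\<lambda>n. measure P (B \<inter> A n)) \<longlonglongrightarrow> measure Q B"
proof -
  have borel: "sets borel = sigma_sets UNIV (Collect closed :: 'a set set)"
    by (simp add: borel_eq_closed)
  show ?thesis
  proof (rule tendsto_measure_Int_sigma_sets[OF P(1) Q(1), where G="Collect closed" and \<Omega>=UNIV])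
    show "Int_stable (Collect closed :: 'a set set)"
      by (auto simp: Int_stable_def)
  qed (use P(2) Q(2) A B borel tendsto_measure_Int_closed[OF P Q A weak] in auto)
qed

lemma tendsto_measure_Int_universal_sets:
  fixes P0 Q :: "'a::topological_space measure"
  assumes P0: "sets P0 = sets borel" "finite_measure P0"
    and Q: "finite_measure Q" "sets Q = universal_sets"
    and A: "\<And>n. A n \<in> universal_sets"
    and borel: "\<And>B. B \<in> sets borel \<Longrightarrow> (\<lambda>n. measure (univ_restrict P0) (B \<inter> A n)) \<longlonglongrightarrow> measure Q B"
    and E: "E \<in> universal_sets"
  shows "(\<lambda>n. measure (univ_restrict P0) (E \<inter> A n)) \<longlonglongrightarrow> measure Q E"
proof -
  let ?P = "univ_restrict P0"
  have P0_sigma: "sigma_finite_measure P0"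
    using P0(2) by (rule finite_measure.sigma_finite_measure)
  have "E \<in> sets (completion P0)"
    using E universal_sets_subset_completion[OF P0(1) P0_sigma] by blast
  then obtain S N0 N where "E = S \<union> N0" "N0 \<subseteq> N" "N \<in> null_sets P0" "S \<in> sets P0"
    by (rule sets_completionE)
  then have borel_SN: "S \<in> sets borel" "N \<in> sets borel" and E_S: "E - N = S - N"
    using P0(1) null_setsD2[OF \<open>N \<in> null_sets P0\<close>] by auto
  have univ_SN: "S \<in> universal_sets" "N \<in> universal_sets"
    using borel_SN sets_borel_subset_universal_sets by auto
  have "emeasure ?P N = 0"
    using emeasure_univ_restrict[OF P0(1) P0_sigma univ_SN(2)] null_sets_completionI[OF \<open>N \<in> null_sets P0\<close>]
    by auto
  then have null_P: "N \<in> null_sets ?P"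
    using univ_SN by auto
  have "measure ?P (N \<inter> A n) = 0" for n
    using null_set_Int2[OF null_P, of "A n"] A by (auto simp: measure_def)
  then have "measure Q N = 0"
    using LIMSEQ_unique[OF borel[OF borel_SN(2)]] by simp
  then have null_Q: "N \<in> null_sets Q"
    using univ_SN Q by (simp add: finite_measure.emeasure_eq_measure null_setsI)
  have ae: "AE x in M. x \<in> E \<longleftrightarrow> x \<in> S" if "N \<in> null_sets M" for M
    using AE_not_in[OF that] by eventually_elim (use E_S in blast)
  have "measure ?P (E \<inter> A n) = measure ?P (S \<inter> A n)" for n
  proof (rule measure_eq_AE)
    show "E \<inter> A n \<in> sets ?P" "S \<inter> A n \<in> sets ?P"
      using sets.Int[of E ?P "A n"] sets.Int[of S ?P "A n"] E univ_SN A by simp_all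
  qed (use ae[OF null_P] in auto)
  moreover have "measure Q E = measure Q S"
    using ae[OF null_Q] E univ_SN Q(2) by (intro measure_eq_AE) auto
  ultimately show ?thesis
    using borel[OF borel_SN(1)] by simp
qed

theorem lemma11:
  fixes P0 Q0 :: "'a::metric_space measure" and A :: "nat \<Rightarrow> 'a set"
  assumes "separable_space (euclidean :: 'a topology)"
    and "sets P0 = sets borel" and "prob_space P0"
    and "sets Q0 = sets borel" and "finite_measure Q0"
    and "\<And>n. A n \<in> universal_sets"
    and "weak_conv_bc (\<lambda>n. trace_meas (univ_restrict P0) (A n)) (univ_restrict Q0)"
    and "E \<in> universal_sets"
  shows "(\<lambda>n. emeasure (trace_meas (univ_restrict P0) (A n)) E) \<longlonglongrightarrow> emeasure (univ_restrict Q0) E"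
proof -
  let ?P = "univ_restrict P0" and ?Q = "univ_restrict Q0"
  have P0: "finite_measure P0"
    using assms(3) by (simp add: prob_space_def)
  have P: "finite_measure ?P"
    by (rule finite_measure_univ_restrict[OF assms(2) P0])
  have Q: "finite_measure ?Q"
    by (rule finite_measure_univ_restrict[OF assms(4,5)])
  have sets: "sets borel \<subseteq> sets ?P" "sets borel \<subseteq> sets ?Q" "A n \<in> sets ?P" for n
    using sets_borel_subset_universal_sets assms(6) by simp_all
  have "(\<lambda>n. measure ?P (B \<inter> A n)) \<longlonglongrightarrow> measure ?Q B" if "B \<in> sets borel" for B
    using weak_conv_bc_trace_measD[OF sets_univ_restrict assms(6,7)]
    by (rule tendsto_measure_Int_borel[OF P sets(1) Q sets(2,3) _ that])
  then have "(\<lambda>n. measure ?P (E \<inter> A n)) \<longlonglongrightarrow> measure ?Q E"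
    using tendsto_measure_Int_universal_sets[OF assms(2) P0 Q _ assms(6) _ assms(8)] by simp
  moreover have "emeasure (trace_meas ?P (A n)) E = ennreal (measure ?P (E \<inter> A n))" for n
    using emeasure_trace_meas[OF sets_univ_restrict assms(6,8)] finite_measure.emeasure_eq_measure[OF P]
    by simp
  ultimately show ?thesis
    using finite_measure.emeasure_eq_measure[OF Q] by (simp add: tendsto_ennrealI)
qed

end
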